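(* Let $(E\to M,\rho,\langle\cdot,\cdot\rangle,[\cdot,\cdot])$ be a Courant algebroid, $\mathcal{G}$ a generalized metric and $\operatorname{div}$ a divergence operator on $E$, and let $D$ be a metric generalized connection with divergence $\operatorname{div}$ and pure-type torsion, with total generalized Ricci curvature $\mathrm{Ric}$. Then $\mathrm{Ric}(a,\mathcal{G}b)=-\mathrm{Ric}(\mathcal{G}a,b)$ for all $a,b\in\Gamma(E)$. In particular, $\mathrm{Ric}'_{\mathrm{GF}}$ is skew-symmetric if and only if $\mathrm{Ric}$ is symmetric.
   Context: A Courant algebroid $(E\to M,\rho,\langle\cdot,\cdot\rangle,[\cdot,\cdot])$: vector bundle $E$ with nondegenerate symmetric form, anchor $\rho:E\to TM$ and bracket on $\Gamma(E)$ with $[a,[b,c]]=[[a,b],c]+[b,[a,c]]$, $\mathcal{L}_{\rho a}\langle b,c\rangle=\langle[a,b],c\rangle+\langle b,[a,c]\rangle$, $2[a,a]=\rho^*d\langle a,a\rangle$. A generalized connection is a linear $D:\Gamma(E)\to\Gamma(E^*\otimes E)$ with $D(fa)=fDa+\rho^*df\otimes a$ and $\rho^*d\langle a,b\rangle=\langle Da,b\rangle+\langle a,Db\rangle$; $D_ba:=(Da)(b)$, $(Da)^*$ is the adjoint of $b\mapsto D_ba$. Naive curvature $\mathcal{R}_0(a,b)c:=D_aD_bc-D_bD_ac-D_{[a,b]}c$. A generalized metric is a self-adjoint $\mathcal{G}\in\operatorname{End}E$ with $\mathcal{G}^2=1$; $V_\pm=\ker(\mathcal{G}\mp1)$, $x_\pm:=\tfrac12(1\pm\mathcal{G})x$.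 $D$ is metric if it preserves $\Gamma(V_\pm)$. A divergence operator is linear $\operatorname{div}:\Gamma(E)\to C^\infty(M)$ with $\operatorname{div}(fa)=f\operatorname{div}a+\mathcal{L}_{\rho a}f$; $D$ has divergence $\operatorname{div}$ if $\operatorname{div}a=\operatorname{tr}(Da)$. Torsion $T(a,b):=D_ab-D_ba-[a,b]+(Da)^*b\in\Gamma(\wedge^3E^* )$ is of pure type if $T\in\Gamma(\wedge^3V_+\oplus\wedge^3V_-)$. Total curvature $\mathcal{R}(a,b):=\mathcal{R}_0(a_+,b_-)+\mathcal{R}_0(a_-,b_+)$; total generalized Ricci curvature $\mathrm{Ric}(a,b):=\operatorname{tr}(c\mapsto\mathcal{R}(c,a)b)$. $\mathrm{Ric}^\pm_{\mathrm{GF}}(a_\mp,b_\pm)$ is the trace of $V_\pm\to V_\pm$, $c_\pm\mapsto\mathcal{R}_0(c_\pm,a_\mp)b_\pm$, and $\mathrm{Ric}'_{\mathrm{GF}}(a,b):=\mathrm{Ric}^+_{\mathrm{GF}}(a_-,b_+)-\mathrm{Ric}^-_{\mathrm{GF}}(a_+,b_-)$. *)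

theory Defs
  imports Complex_Main
begin

text \<open>Algebraic (Serre--Swan) model of a Courant algebroid.
  'r plays the role of the function ring C^inf(M) (a commutative real algebra),
  'e the role of the space of sections Gamma(E) (a real vector space which is an 'r-module
  via sm).  anchor a is the vector field rho(a), acting as a derivation on 'r.
  ip is the pairing, br the bracket.\<close>

definition is_frame ::
  "('r::comm_ring_1 \<Rightarrow> 'e::ab_group_add \<Rightarrow> 'e) \<Rightarrow> ('e \<Rightarrow> 'e \<Rightarrow> 'r)
   \<Rightarrow> nat \<Rightarrow> (nat \<Rightarrow> 'e) \<Rightarrow> (nat \<Rightarrow> 'e) \<Rightarrow> bool" where
  "is_frame sm ip n e f \<longleftrightarrow> (\<forall>x. x = (\<Sum>i<n. sm (ip (f i) x) (e i)))"

text \<open>Trace of an endomorphism of Gamma(E), computed with any finite (generating) frame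
  and its dual frame with respect to the pairing.\<close>
definition ca_trace ::
  "('r::comm_ring_1 \<Rightarrow> 'e::ab_group_add \<Rightarrow> 'e) \<Rightarrow> ('e \<Rightarrow> 'e \<Rightarrow> 'r) \<Rightarrow> ('e \<Rightarrow> 'e) \<Rightarrow> 'r" where
  "ca_trace sm ip \<phi> =
     (THE t. \<forall>n e f. is_frame sm ip n e f \<longrightarrow> t = (\<Sum>i<n. ip (f i) (\<phi> (e i))))"

definition is_derivation :: "('r::{comm_ring_1,real_algebra_1} \<Rightarrow> 'r) \<Rightarrow> bool" where
  "is_derivation X \<longleftrightarrow>
     (\<forall>g h. X (g + h) = X g + X h) \<and> (\<forall>c g. X (c *\<^sub>R g) = c *\<^sub>R X g) \<and>
     (\<forall>g h. X (g * h) = g * X h + h * X g)"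

text \<open>rho^* d f, identified with a section via the pairing: <rho^* df, c> = rho(c) f.\<close>
definition rho_d :: "('e \<Rightarrow> 'e \<Rightarrow> 'r) \<Rightarrow> ('e \<Rightarrow> 'r \<Rightarrow> 'r) \<Rightarrow> 'r \<Rightarrow> 'e" where
  "rho_d ip anchor f = (THE x. \<forall>c. ip x c = anchor c f)"

definition courant_algebroid ::
  "('r::{comm_ring_1,real_algebra_1} \<Rightarrow> 'e::real_vector \<Rightarrow> 'e) \<Rightarrow> ('e \<Rightarrow> 'e \<Rightarrow> 'r)
   \<Rightarrow> ('e \<Rightarrow> 'r \<Rightarrow> 'r) \<Rightarrow> ('e \<Rightarrow> 'e \<Rightarrow> 'e) \<Rightarrow> bool" where
  "courant_algebroid sm ip anchor br \<longleftrightarrow>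
     \<comment> \<open>Gamma(E) is an 'r-module compatible with its real structure\<close>
     (\<forall>f a b. sm f (a + b) = sm f a + sm f b) \<and>
     (\<forall>f g a. sm (f + g) a = sm f a + sm g a) \<and>
     (\<forall>f g a. sm (f * g) a = sm f (sm g a)) \<and>
     (\<forall>a. sm 1 a = a) \<and>
     (\<forall>c a. sm (of_real c) a = c *\<^sub>R a) \<and>
     \<comment> \<open>finite rank (finitely generated projective, dualised by the pairing)\<close>
     (\<exists>n e f. is_frame sm ip n e f) \<and>
     \<comment> \<open>nondegenerate symmetric 'r-bilinear pairing\<close>
     (\<forall>a b. ip a b = ip b a) \<and>
     (\<forall>a a' b. ip (a + a') b = ip a b + ip a' b) \<and>
     (\<forall>f a b. ip (sm f a) b = f * ip a b) \<and>
     (\<forall>a. (\<forall>b. ip a b = 0) \<longrightarrow> a = 0) \<and>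
     \<comment> \<open>anchor: bundle map to vector fields (derivations)\<close>
     (\<forall>a. is_derivation (anchor a)) \<and>
     (\<forall>a b g. anchor (a + b) g = anchor a g + anchor b g) \<and>
     (\<forall>f a g. anchor (sm f a) g = f * anchor a g) \<and>
     \<comment> \<open>real-bilinear bracket\<close>
     (\<forall>a a' b. br (a + a') b = br a b + br a' b) \<and>
     (\<forall>a b b'. br a (b + b') = br a b + br a b') \<and>
     (\<forall>c a b. br (c *\<^sub>R a) b = c *\<^sub>R br a b) \<and>
     (\<forall>c a b. br a (c *\<^sub>R b) = c *\<^sub>R br a b) \<and>
     \<comment> \<open>Courant algebroid axioms\<close>
     (\<forall>a b c. br a (br b c) = br (br a b) c + br b (br a c)) \<and>
     (\<forall>a b c. anchor a (ip b c) = ip (br a b) c + ip b (br a c)) \<and>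
     (\<forall>a. 2 *\<^sub>R br a a = rho_d ip anchor (ip a a))"

definition generalized_metric ::
  "('r::comm_ring_1 \<Rightarrow> 'e::ab_group_add \<Rightarrow> 'e) \<Rightarrow> ('e \<Rightarrow> 'e \<Rightarrow> 'r) \<Rightarrow> ('e \<Rightarrow> 'e) \<Rightarrow> bool" where
  "generalized_metric sm ip G \<longleftrightarrow>
     (\<forall>a b. G (a + b) = G a + G b) \<and> (\<forall>f a. G (sm f a) = sm f (G a)) \<and>
     (\<forall>a b. ip (G a) b = ip a (G b)) \<and> (\<forall>a. G (G a) = a)"

definition gplus :: "('e::real_vector \<Rightarrow> 'e) \<Rightarrow> 'e \<Rightarrow> 'e" where
  "gplus G a = (1/2) *\<^sub>R (a + G a)"

definition gminus :: "('e::real_vector \<Rightarrow> 'e) \<Rightarrow> 'e \<Rightarrow> 'e" where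
  "gminus G a = (1/2) *\<^sub>R (a - G a)"

text \<open>D b a stands for D_b a.\<close>
definition generalized_connection ::
  "('r::{comm_ring_1,real_algebra_1} \<Rightarrow> 'e::real_vector \<Rightarrow> 'e) \<Rightarrow> ('e \<Rightarrow> 'e \<Rightarrow> 'r)
   \<Rightarrow> ('e \<Rightarrow> 'r \<Rightarrow> 'r) \<Rightarrow> ('e \<Rightarrow> 'e \<Rightarrow> 'e) \<Rightarrow> bool" where
  "generalized_connection sm ip anchor D \<longleftrightarrow>
     \<comment> \<open>Da is a section of E^* (x) E\<close>
     (\<forall>a b b'. D (b + b') a = D b a + D b' a) \<and>
     (\<forall>f a b. D (sm f b) a = sm f (D b a)) \<and>
     \<comment> \<open>D is real-linear\<close>
     (\<forall>a a' b. D b (a + a') = D b a + D b a') \<and>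
     (\<forall>c a b. D b (c *\<^sub>R a) = c *\<^sub>R D b a) \<and>
     \<comment> \<open>D(fa) = f Da + rho^* df (x) a\<close>
     (\<forall>f a b. D b (sm f a) = sm f (D b a) + sm (anchor b f) a) \<and>
     \<comment> \<open>rho^* d<a,b> = <Da,b> + <a,Db>\<close>
     (\<forall>a b c. anchor c (ip a b) = ip (D c a) b + ip a (D c b))"

definition metric_connection :: "('e::real_vector \<Rightarrow> 'e) \<Rightarrow> ('e \<Rightarrow> 'e \<Rightarrow> 'e) \<Rightarrow> bool" where
  "metric_connection G D \<longleftrightarrow>
     (\<forall>a b. G a = a \<longrightarrow> G (D b a) = D b a) \<and>
     (\<forall>a b. G a = - a \<longrightarrow> G (D b a) = - D b a)"

definition divergence_operator ::
  "('r::{comm_ring_1,real_algebra_1} \<Rightarrow> 'e::real_vector \<Rightarrow> 'e) \<Rightarrow> ('e \<Rightarrow> 'r \<Rightarrow> 'r)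
   \<Rightarrow> ('e \<Rightarrow> 'r) \<Rightarrow> bool" where
  "divergence_operator sm anchor dv \<longleftrightarrow>
     (\<forall>a b. dv (a + b) = dv a + dv b) \<and> (\<forall>c a. dv (c *\<^sub>R a) = c *\<^sub>R dv a) \<and>
     (\<forall>f a. dv (sm f a) = f * dv a + anchor a f)"

definition has_divergence ::
  "('r::comm_ring_1 \<Rightarrow> 'e::ab_group_add \<Rightarrow> 'e) \<Rightarrow> ('e \<Rightarrow> 'e \<Rightarrow> 'r) \<Rightarrow> ('e \<Rightarrow> 'e \<Rightarrow> 'e)
   \<Rightarrow> ('e \<Rightarrow> 'r) \<Rightarrow> bool" where
  "has_divergence sm ip D dv \<longleftrightarrow> (\<forall>a. dv a = ca_trace sm ip (\<lambda>b. D b a))"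

definition adjoint :: "('e \<Rightarrow> 'e \<Rightarrow> 'r) \<Rightarrow> ('e \<Rightarrow> 'e) \<Rightarrow> 'e \<Rightarrow> 'e" where
  "adjoint ip \<phi> b = (THE x. \<forall>c. ip x c = ip b (\<phi> c))"

definition torsion ::
  "('e::ab_group_add \<Rightarrow> 'e \<Rightarrow> 'r) \<Rightarrow> ('e \<Rightarrow> 'e \<Rightarrow> 'e) \<Rightarrow> ('e \<Rightarrow> 'e \<Rightarrow> 'e) \<Rightarrow> 'e \<Rightarrow> 'e \<Rightarrow> 'e" where
  "torsion ip br D a b = D a b - D b a - br a b + adjoint ip (\<lambda>c. D c a) b"

text \<open>T in Gamma(wedge^3 V+ (+) wedge^3 V-): the 3-form <T(a,b),c> vanishes on mixed types.\<close>
definition pure_type_torsion ::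
  "('e::real_vector \<Rightarrow> 'e \<Rightarrow> 'r::comm_ring_1) \<Rightarrow> ('e \<Rightarrow> 'e \<Rightarrow> 'e) \<Rightarrow> ('e \<Rightarrow> 'e)
   \<Rightarrow> ('e \<Rightarrow> 'e \<Rightarrow> 'e) \<Rightarrow> bool" where
  "pure_type_torsion ip br G D \<longleftrightarrow>
     (\<forall>a b c. ip (torsion ip br D a b) c =
        ip (torsion ip br D (gplus G a) (gplus G b)) (gplus G c) +
        ip (torsion ip br D (gminus G a) (gminus G b)) (gminus G c))"

definition naive_curv :: "('e::ab_group_add \<Rightarrow> 'e \<Rightarrow> 'e) \<Rightarrow> ('e \<Rightarrow> 'e \<Rightarrow> 'e) \<Rightarrow> 'e \<Rightarrow> 'e \<Rightarrow> 'e \<Rightarrow> 'e" where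
  "naive_curv br D a b c = D a (D b c) - D b (D a c) - D (br a b) c"

definition total_curv ::
  "('e::real_vector \<Rightarrow> 'e \<Rightarrow> 'e) \<Rightarrow> ('e \<Rightarrow> 'e) \<Rightarrow> ('e \<Rightarrow> 'e \<Rightarrow> 'e) \<Rightarrow> 'e \<Rightarrow> 'e \<Rightarrow> 'e \<Rightarrow> 'e" where
  "total_curv br G D a b c =
     naive_curv br D (gplus G a) (gminus G b) c + naive_curv br D (gminus G a) (gplus G b) c"

definition total_ric ::
  "('r::comm_ring_1 \<Rightarrow> 'e::real_vector \<Rightarrow> 'e) \<Rightarrow> ('e \<Rightarrow> 'e \<Rightarrow> 'r) \<Rightarrow> ('e \<Rightarrow> 'e \<Rightarrow> 'e)
   \<Rightarrow> ('e \<Rightarrow> 'e) \<Rightarrow> ('e \<Rightarrow> 'e \<Rightarrow> 'e) \<Rightarrow> 'e \<Rightarrow> 'e \<Rightarrow> 'r" where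
  "total_ric sm ip br G D a b = ca_trace sm ip (\<lambda>c. total_curv br G D c a b)"

text \<open>Trace of an endomorphism of Gamma(V+) (resp. Gamma(V-)), computed as the trace of its
  extension by zero on V-, i.e. of P+ o phi o P+.\<close>
definition trace_plus ::
  "('r::comm_ring_1 \<Rightarrow> 'e::real_vector \<Rightarrow> 'e) \<Rightarrow> ('e \<Rightarrow> 'e \<Rightarrow> 'r) \<Rightarrow> ('e \<Rightarrow> 'e) \<Rightarrow> ('e \<Rightarrow> 'e) \<Rightarrow> 'r" where
  "trace_plus sm ip G \<phi> = ca_trace sm ip (\<lambda>c. gplus G (\<phi> (gplus G c)))"

definition trace_minus ::
  "('r::comm_ring_1 \<Rightarrow> 'e::real_vector \<Rightarrow> 'e) \<Rightarrow> ('e \<Rightarrow> 'e \<Rightarrow> 'r) \<Rightarrow> ('e \<Rightarrow> 'e) \<Rightarrow> ('e \<Rightarrow> 'e) \<Rightarrow> 'r" where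
  "trace_minus sm ip G \<phi> = ca_trace sm ip (\<lambda>c. gminus G (\<phi> (gminus G c)))"

text \<open>ric_gf_plus a b = Ric^+_GF(a_-, b_+), ric_gf_minus a b = Ric^-_GF(a_+, b_-).\<close>
definition ric_gf_plus ::
  "('r::comm_ring_1 \<Rightarrow> 'e::real_vector \<Rightarrow> 'e) \<Rightarrow> ('e \<Rightarrow> 'e \<Rightarrow> 'r) \<Rightarrow> ('e \<Rightarrow> 'e \<Rightarrow> 'e)
   \<Rightarrow> ('e \<Rightarrow> 'e) \<Rightarrow> ('e \<Rightarrow> 'e \<Rightarrow> 'e) \<Rightarrow> 'e \<Rightarrow> 'e \<Rightarrow> 'r" where
  "ric_gf_plus sm ip br G D a b =
     trace_plus sm ip G (\<lambda>c. naive_curv br D c (gminus G a) (gplus G b))"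

definition ric_gf_minus ::
  "('r::comm_ring_1 \<Rightarrow> 'e::real_vector \<Rightarrow> 'e) \<Rightarrow> ('e \<Rightarrow> 'e \<Rightarrow> 'r) \<Rightarrow> ('e \<Rightarrow> 'e \<Rightarrow> 'e)
   \<Rightarrow> ('e \<Rightarrow> 'e) \<Rightarrow> ('e \<Rightarrow> 'e \<Rightarrow> 'e) \<Rightarrow> 'e \<Rightarrow> 'e \<Rightarrow> 'r" where
  "ric_gf_minus sm ip br G D a b =
     trace_minus sm ip G (\<lambda>c. naive_curv br D c (gplus G a) (gminus G b))"

definition ric_gf' ::
  "('r::comm_ring_1 \<Rightarrow> 'e::real_vector \<Rightarrow> 'e) \<Rightarrow> ('e \<Rightarrow> 'e \<Rightarrow> 'r) \<Rightarrow> ('e \<Rightarrow> 'e \<Rightarrow> 'e)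
   \<Rightarrow> ('e \<Rightarrow> 'e) \<Rightarrow> ('e \<Rightarrow> 'e \<Rightarrow> 'e) \<Rightarrow> 'e \<Rightarrow> 'e \<Rightarrow> 'r" where
  "ric_gf' sm ip br G D a b = ric_gf_plus sm ip br G D a b - ric_gf_minus sm ip br G D a b"

end

theory Submission
  imports Defs
begin

text \<open>Write R(c, a) b = R0(c_+, a_-) b + R0(c_-, a_+) b and split b = b_+ + b_-.
  Since D preserves V_+ and V_-, the mixed term c \<mapsto> R0(c_+, a_-) b_- factors through the
  projection onto V_+ and takes values in V_-, so by cyclicity of the trace it is traceless;
  likewise for c \<mapsto> R0(c_-, a_+) b_+. Hence Ric(a, b) = Ric^+_GF(a_-, b_+) + Ric^-_GF(a_+, b_-).
  As G acts by +1 on a_+ and by -1 on a_-, the antisymmetry under G follows termwise, and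
  evaluating at (a_-, b_+) shows that skew-symmetry of Ric'_GF and symmetry of Ric are both
  equivalent to Ric^+_GF(a_-, b_+) = Ric^-_GF(b_+, a_-) for all a, b.\<close>

definition module_endo :: "('r::comm_ring_1 \<Rightarrow> 'e::ab_group_add \<Rightarrow> 'e) \<Rightarrow> ('e \<Rightarrow> 'e) \<Rightarrow> bool" where
  "module_endo sm \<phi> \<longleftrightarrow> (\<forall>x y. \<phi> (x + y) = \<phi> x + \<phi> y) \<and> (\<forall>g x. \<phi> (sm g x) = sm g (\<phi> x))"

lemma
  assumes "module_endo sm \<phi>"
  shows module_endo_add: "\<phi> (x + y) = \<phi> x + \<phi> y"
    and module_endo_sm: "\<phi> (sm g x) = sm g (\<phi> x)"
  using assms unfolding module_endo_def by blast+

lemma module_endo_zero: "module_endo sm \<phi> \<Longrightarrow> \<phi> 0 = 0"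
  using module_endo_add[of sm \<phi> 0 0] by simp

lemma module_endo_sum: "module_endo sm \<phi> \<Longrightarrow> \<phi> (sum h A) = (\<Sum>i\<in>A. \<phi> (h i))"
  by (induct A rule: infinite_finite_induct) (simp_all add: module_endo_zero module_endo_add)

lemma module_endo_comp: "module_endo sm \<phi> \<Longrightarrow> module_endo sm \<psi> \<Longrightarrow> module_endo sm (\<phi> \<circ> \<psi>)"
  unfolding module_endo_def by simp

locale courant =
  fixes sm :: "'r::{comm_ring_1,real_algebra_1} \<Rightarrow> 'e::real_vector \<Rightarrow> 'e"
    and ip :: "'e \<Rightarrow> 'e \<Rightarrow> 'r"
    and anchor :: "'e \<Rightarrow> 'r \<Rightarrow> 'r"
    and br :: "'e \<Rightarrow> 'e \<Rightarrow> 'e"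
  assumes courant: "courant_algebroid sm ip anchor br"
begin

abbreviation tr :: "('e \<Rightarrow> 'e) \<Rightarrow> 'r" where
  "tr \<equiv> ca_trace sm ip"

lemma
  shows sm_add: "sm f (a + b) = sm f a + sm f b"
    and sm_mult: "sm (f * g) a = sm f (sm g a)"
    and sm_of_real: "sm (of_real t) a = t *\<^sub>R a"
    and frame_exists: "\<exists>n e f. is_frame sm ip n e f"
    and ip_commute: "ip a b = ip b a"
    and ip_add: "ip (a + a') b = ip a b + ip a' b"
    and ip_sm: "ip (sm f a) b = f * ip a b"
    and ip_nondegenerate: "(\<And>b. ip a b = 0) \<Longrightarrow> a = 0"
    and anchor_derivation: "is_derivation (anchor a)"
    and anchor_add: "anchor (a + b) g = anchor a g + anchor b g"
    and anchor_sm: "anchor (sm f a) g = f * anchor a g"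
    and br_add_left: "br (a + a') b = br a b + br a' b"
    and br_add_right: "br a (b + b') = br a b + br a b'"
    and anchor_ip: "anchor a (ip b c) = ip (br a b) c + ip b (br a c)"
    and br_self: "2 *\<^sub>R br a a = rho_d ip anchor (ip a a)"
  using courant unfolding courant_algebroid_def by auto

lemma sm_zero [simp]: "sm f 0 = 0"
  using sm_add[of f 0 0] by simp

lemma sm_minus: "sm f (- a) = - sm f a"
  using sm_add[of f a "- a"] by (simp add: eq_neg_iff_add_eq_0 add.commute)

lemma sm_diff: "sm f (a - b) = sm f a - sm f b"
  using sm_add[of f a "- b"] by (simp add: sm_minus)

lemma sm_scaleR: "sm f (t *\<^sub>R a) = t *\<^sub>R sm f a"
  by (metis sm_of_real sm_mult mult.commute)

lemma ip_add_right: "ip b (a + a') = ip b a + ip b a'"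
  by (metis ip_commute ip_add)

lemma ip_sm_right: "ip b (sm f a) = f * ip b a"
  by (metis ip_commute ip_sm)

lemma ip_zero_right [simp]: "ip b 0 = 0"
  using ip_add_right[of b 0 0] by simp

lemma ip_zero [simp]: "ip 0 b = 0"
  using ip_add[of 0 0 b] by simp

lemma ip_minus: "ip (- a) b = - ip a b"
  using ip_add[of a "- a" b] by (simp add: eq_neg_iff_add_eq_0 add.commute)

lemma ip_minus_right: "ip b (- a) = - ip b a"
  by (metis ip_commute ip_minus)

lemma ip_diff: "ip (a - a') b = ip a b - ip a' b"
  using ip_add[of a "- a'" b] by (simp add: ip_minus)

lemma ip_diff_right: "ip b (a - a') = ip b a - ip b a'"
  by (metis ip_commute ip_diff)

lemma ip_scaleR: "ip (t *\<^sub>R a) b = t *\<^sub>R ip a b"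
  by (metis sm_of_real ip_sm scaleR_conv_of_real)

lemma ip_scaleR_right: "ip b (t *\<^sub>R a) = t *\<^sub>R ip b a"
  by (metis ip_commute ip_scaleR)

lemma ip_sum: "ip (sum h A) b = (\<Sum>i\<in>A. ip (h i) b)"
  by (induct A rule: infinite_finite_induct) (simp_all add: ip_add)

lemma ip_sum_right: "ip b (sum h A) = (\<Sum>i\<in>A. ip b (h i))"
  by (induct A rule: infinite_finite_induct) (simp_all add: ip_add_right)

lemma ip_eqI: "(\<And>c. ip x c = ip y c) \<Longrightarrow> x = y"
  using ip_nondegenerate[of "x - y"] by (simp add: ip_diff)

lemma anchor_zero: "anchor 0 g = 0"
  using anchor_add[of 0 0 g] by simp

lemma anchor_sum: "anchor (sum h A) g = (\<Sum>i\<in>A. anchor (h i) g)"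
  by (induct A rule: infinite_finite_induct) (simp_all add: anchor_add anchor_zero)

lemma anchor_add_right: "anchor a (g + h) = anchor a g + anchor a h"
  and anchor_mult_right: "anchor a (g * h) = g * anchor a h + h * anchor a g"
  using anchor_derivation unfolding is_derivation_def by blast+

lemma frame_expand: "is_frame sm ip n e f \<Longrightarrow> x = (\<Sum>i<n. sm (ip (f i) x) (e i))"
  unfolding is_frame_def by blast

lemma frame_expand_dual:
  assumes "is_frame sm ip n e f"
  shows "y = (\<Sum>i<n. sm (ip y (e i)) (f i))"
proof (rule ip_eqI[symmetric])
  fix x
  have "ip (\<Sum>i<n. sm (ip y (e i)) (f i)) x = ip y (\<Sum>i<n. sm (ip (f i) x) (e i))"
    by (simp add: ip_sum ip_sum_right ip_sm ip_sm_right mult.commute)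
  also have "\<dots> = ip y x"
    using frame_expand[OF assms, of x] by simp
  finally show "ip (\<Sum>i<n. sm (ip y (e i)) (f i)) x = ip y x" .
qed

lemma rho_d_ip: "ip (rho_d ip anchor g) c = anchor c g"
proof -
  obtain n e f where frame: "is_frame sm ip n e f"
    using frame_exists by blast
  define x where "x = (\<Sum>i<n. sm (anchor (e i) g) (f i))"
  have x: "ip x c = anchor c g" for c
  proof -
    have "ip x c = anchor (\<Sum>i<n. sm (ip (f i) c) (e i)) g"
      unfolding x_def by (simp add: ip_sum ip_sm anchor_sum anchor_sm mult.commute)
    then show ?thesis
      using frame_expand[OF frame, of c] by simp
  qed
  have "rho_d ip anchor g = x"
    unfolding rho_d_def by (rule the_equality) (use x ip_eqI in auto)
  then show ?thesis
    using x by simp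
qed

lemma rho_d_add: "rho_d ip anchor (g + h) = rho_d ip anchor g + rho_d ip anchor h"
  by (rule ip_eqI) (simp add: rho_d_ip ip_add anchor_add_right)

lemma br_minus_right: "br a (- b) = - br a b"
  using br_add_right[of a b "- b"] br_add_right[of a 0 0]
  by (simp add: eq_neg_iff_add_eq_0 add.commute)

lemma br_anticommute_orthogonal:
  assumes "ip x y = 0"
  shows "br x y = - br y x"
proof -
  have "2 *\<^sub>R br (x + y) (x + y) = rho_d ip anchor (ip x x + ip y y)"
    using assms ip_commute[of y x] by (simp add: br_self ip_add ip_add_right)
  also have "\<dots> = 2 *\<^sub>R br x x + 2 *\<^sub>R br y y"
    by (simp add: rho_d_add br_self)
  finally have "2 *\<^sub>R (br x y + br y x) = 0"
    by (simp add: br_add_left br_add_right algebra_simps)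
  then show ?thesis
    by (simp add: eq_neg_iff_add_eq_0)
qed

lemma br_sm_right: "br a (sm f b) = sm f (br a b) + sm (anchor a f) b"
proof (rule ip_eqI)
  fix c
  have "ip (br a (sm f b)) c = anchor a (ip (sm f b) c) - ip (sm f b) (br a c)"
    using anchor_ip[of a "sm f b" c] by (simp add: algebra_simps)
  also have "\<dots> = f * ip (br a b) c + anchor a f * ip b c"
    using anchor_ip[of a b c] by (simp add: ip_sm anchor_mult_right algebra_simps)
  finally show "ip (br a (sm f b)) c = ip (sm f (br a b) + sm (anchor a f) b) c"
    by (simp add: ip_add ip_sm)
qed

text \<open>Without orthogonality the right-hand side acquires the extra term <c, a> rho^* df.\<close>

lemma br_sm_left_orthogonal:
  assumes "ip c a = 0"
  shows "br (sm f c) a = sm f (br c a) - sm (anchor a f) c"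
proof -
  have "br (sm f c) a = - br a (sm f c)"
    using assms by (simp add: br_anticommute_orthogonal ip_sm)
  also have "\<dots> = - sm f (br a c) - sm (anchor a f) c"
    by (simp add: br_sm_right)
  also have "sm f (br a c) = - sm f (br c a)"
    using assms by (simp add: br_anticommute_orthogonal sm_minus)
  finally show ?thesis
    by simp
qed

lemma frame_trace_indep:
  assumes \<phi>: "module_endo sm \<phi>"
    and frame: "is_frame sm ip n e f" and frame': "is_frame sm ip m e' f'"
  shows "(\<Sum>i<n. ip (f i) (\<phi> (e i))) = (\<Sum>j<m. ip (f' j) (\<phi> (e' j)))"
proof -
  have "(\<Sum>i<n. ip (f i) (\<phi> (e i))) = (\<Sum>i<n. ip (f i) (\<phi> (\<Sum>j<m. sm (ip (f' j) (e i)) (e' j))))"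
    using frame_expand[OF frame'] by metis
  also have "\<dots> = (\<Sum>i<n. \<Sum>j<m. ip (f' j) (e i) * ip (f i) (\<phi> (e' j)))"
    by (simp add: module_endo_sum[OF \<phi>] module_endo_sm[OF \<phi>] ip_sum_right ip_sm_right)
  also have "\<dots> = (\<Sum>j<m. \<Sum>i<n. ip (f' j) (e i) * ip (f i) (\<phi> (e' j)))"
    by (rule sum.swap)
  also have "\<dots> = (\<Sum>j<m. ip (\<Sum>i<n. sm (ip (f' j) (e i)) (f i)) (\<phi> (e' j)))"
    by (simp add: ip_sum ip_sm)
  also have "\<dots> = (\<Sum>j<m. ip (f' j) (\<phi> (e' j)))"
    using frame_expand_dual[OF frame] by metis
  finally show ?thesis .
qed

lemma ca_trace_eq:
  assumes "module_endo sm \<phi>" and "is_frame sm ip n e f"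
  shows "tr \<phi> = (\<Sum>i<n. ip (f i) (\<phi> (e i)))"
  unfolding ca_trace_def
  by (rule the_equality) (use assms frame_trace_indep in blast)+

lemma module_endo_add_fun:
  "module_endo sm \<phi> \<Longrightarrow> module_endo sm \<psi> \<Longrightarrow> module_endo sm (\<lambda>c. \<phi> c + \<psi> c)"
  unfolding module_endo_def by (simp add: sm_add algebra_simps)

lemma ca_trace_add:
  assumes "module_endo sm \<phi>" and "module_endo sm \<psi>"
  shows "tr (\<lambda>c. \<phi> c + \<psi> c) = tr \<phi> + tr \<psi>"
proof -
  obtain n e f where frame: "is_frame sm ip n e f"
    using frame_exists by blast
  show ?thesis
    using assms module_endo_add_fun[OF assms]
    by (simp add: ca_trace_eq[OF _ frame] ip_add_right sum.distrib)
qed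

lemma ca_trace_minus:
  assumes "module_endo sm \<phi>"
  shows "tr (\<lambda>c. - \<phi> c) = - tr \<phi>"
proof -
  obtain n e f where frame: "is_frame sm ip n e f"
    using frame_exists by blast
  have "module_endo sm (\<lambda>c. - \<phi> c)"
    using assms unfolding module_endo_def by (simp add: sm_minus)
  then show ?thesis
    using assms by (simp add: ca_trace_eq[OF _ frame] ip_minus_right sum_negf)
qed

lemma ca_trace_zero: "tr (\<lambda>c. 0) = 0"
proof -
  obtain n e f where frame: "is_frame sm ip n e f"
    using frame_exists by blast
  have "module_endo sm (\<lambda>c. 0)"
    unfolding module_endo_def by simp
  then show ?thesis
    by (simp add: ca_trace_eq[OF _ frame])
qed

lemma ca_trace_comp_commute:
  assumes "module_endo sm \<phi>" and "module_endo sm \<psi>"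
  shows "tr (\<phi> \<circ> \<psi>) = tr (\<psi> \<circ> \<phi>)"
proof -
  obtain n e f where frame: "is_frame sm ip n e f"
    using frame_exists by blast
  have expand: "tr (\<phi> \<circ> \<psi>) = (\<Sum>i<n. \<Sum>j<n. ip (f j) (\<psi> (e i)) * ip (f i) (\<phi> (e j)))"
    if \<phi>: "module_endo sm \<phi>" and \<psi>: "module_endo sm \<psi>" for \<phi> \<psi>
  proof -
    have "tr (\<phi> \<circ> \<psi>) = (\<Sum>i<n. ip (f i) (\<phi> (\<psi> (e i))))"
      using ca_trace_eq[OF module_endo_comp[OF \<phi> \<psi>] frame] by simp
    also have "\<dots> = (\<Sum>i<n. ip (f i) (\<phi> (\<Sum>j<n. sm (ip (f j) (\<psi> (e i))) (e j))))"
      using frame_expand[OF frame] by metis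
    also have "\<dots> = (\<Sum>i<n. \<Sum>j<n. ip (f j) (\<psi> (e i)) * ip (f i) (\<phi> (e j)))"
      by (simp add: module_endo_sum[OF \<phi>] module_endo_sm[OF \<phi>] ip_sum_right ip_sm_right)
    finally show ?thesis .
  qed
  have "tr (\<phi> \<circ> \<psi>) = (\<Sum>j<n. \<Sum>i<n. ip (f j) (\<psi> (e i)) * ip (f i) (\<phi> (e j)))"
    unfolding expand[OF assms] by (rule sum.swap)
  also have "\<dots> = tr (\<psi> \<circ> \<phi>)"
    unfolding expand[OF assms(2,1)] by (simp add: mult.commute)
  finally show ?thesis .
qed

lemma ca_trace_sandwich_eq_0:
  assumes \<phi>: "module_endo sm \<phi>" and p: "module_endo sm p" and q: "module_endo sm q"
    and sandwich: "\<And>x. \<phi> x = q (\<phi> (p x))" and pq: "\<And>x. p (q x) = 0"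
  shows "tr \<phi> = 0"
proof -
  have factor: "q \<circ> (\<phi> \<circ> p) = \<phi>"
    unfolding fun_eq_iff comp_def using sandwich by metis
  have "tr \<phi> = tr ((\<phi> \<circ> p) \<circ> q)"
    using ca_trace_comp_commute[OF q module_endo_comp[OF \<phi> p]] by (simp only: factor)
  also have "(\<phi> \<circ> p) \<circ> q = (\<lambda>c. 0)"
    using pq module_endo_zero[OF \<phi>] by auto
  finally show ?thesis
    by (simp add: ca_trace_zero)
qed

end

locale courant_connection = courant +
  fixes D
  assumes connection: "generalized_connection sm ip anchor D"
begin

abbreviation "R0 \<equiv> naive_curv br D"

lemma
  shows D_add_left: "D (b + b') a = D b a + D b' a"
    and D_sm_left: "D (sm f b) a = sm f (D b a)"
    and D_add: "D b (a + a') = D b a + D b a'"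
    and D_sm: "D b (sm f a) = sm f (D b a) + sm (anchor b f) a"
  using connection unfolding generalized_connection_def by blast+

lemma D_zero [simp]: "D b 0 = 0"
  using D_add[of b 0 0] by simp

lemma D_minus_left: "D (- b) a = - D b a"
  using D_add_left[of b "- b" a] D_add_left[of 0 0 a] by (simp add: eq_neg_iff_add_eq_0 add.commute)

lemma D_minus: "D b (- a) = - D b a"
  using D_add[of b a "- a"] by (simp add: eq_neg_iff_add_eq_0 add.commute)

lemma D_diff_left: "D (b - b') a = D b a - D b' a"
  using D_add_left[of b "- b'" a] by (simp add: D_minus_left)

lemma naive_curv_add_left: "R0 (c + c') a b = R0 c a b + R0 c' a b"
  unfolding naive_curv_def by (simp add: D_add_left D_add br_add_left algebra_simps)

lemma naive_curv_add_right: "R0 c a (b + b') = R0 c a b + R0 c a b'"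
  unfolding naive_curv_def by (simp add: D_add_left D_add algebra_simps)

lemma naive_curv_minus_middle: "R0 c (- a) b = - R0 c a b"
  unfolding naive_curv_def by (simp add: D_minus_left D_minus br_minus_right algebra_simps)

lemma naive_curv_minus_right: "R0 c a (- b) = - R0 c a b"
  unfolding naive_curv_def by (simp add: D_minus algebra_simps)

lemma naive_curv_zero_right: "R0 c a 0 = 0"
  unfolding naive_curv_def by simp

lemma naive_curv_sm_left_orthogonal:
  assumes "ip c a = 0"
  shows "R0 (sm f c) a b = sm f (R0 c a b)"
  unfolding naive_curv_def using assms
  by (simp add: D_sm_left D_sm br_sm_left_orthogonal D_diff_left sm_diff sm_add algebra_simps)

lemma module_endo_naive_curv:
  assumes p: "module_endo sm p" and orth: "\<And>c. ip (p c) a = 0"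
  shows "module_endo sm (\<lambda>c. R0 (p c) a b)"
  unfolding module_endo_def
  by (simp add: module_endo_add[OF p] module_endo_sm[OF p] naive_curv_add_left
      naive_curv_sm_left_orthogonal[OF orth])

end

locale courant_gmetric = courant +
  fixes G
  assumes gmetric: "generalized_metric sm ip G"
begin

lemma
  shows G_add: "G (a + b) = G a + G b"
    and G_sm: "G (sm f a) = sm f (G a)"
    and ip_G: "ip (G a) b = ip a (G b)"
    and G_G [simp]: "G (G a) = a"
  using gmetric unfolding generalized_metric_def by blast+

lemma G_minus: "G (- a) = - G a"
  using G_add[of a "- a"] G_add[of 0 0] by (simp add: eq_neg_iff_add_eq_0 add.commute)

lemma G_diff: "G (a - b) = G a - G b"
  using G_add[of a "- b"] by (simp add: G_minus)

lemma G_scaleR: "G (t *\<^sub>R a) = t *\<^sub>R G a"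
  by (metis sm_of_real G_sm)

lemma gplus_add: "gplus G (a + b) = gplus G a + gplus G b"
  unfolding gplus_def by (simp add: G_add algebra_simps)

lemma gminus_add: "gminus G (a + b) = gminus G a + gminus G b"
  unfolding gminus_def by (simp add: G_add algebra_simps)

lemma gplus_sm: "gplus G (sm f a) = sm f (gplus G a)"
  unfolding gplus_def by (simp add: G_sm sm_scaleR sm_add)

lemma gminus_sm: "gminus G (sm f a) = sm f (gminus G a)"
  unfolding gminus_def by (simp add: G_sm sm_scaleR sm_diff)

lemma module_endo_gplus: "module_endo sm (gplus G)"
  unfolding module_endo_def by (simp add: gplus_add gplus_sm)

lemma module_endo_gminus: "module_endo sm (gminus G)"
  unfolding module_endo_def by (simp add: gminus_add gminus_sm)

lemma G_gplus: "G (gplus G a) = gplus G a"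
  unfolding gplus_def by (simp add: G_scaleR G_add algebra_simps)

lemma G_gminus: "G (gminus G a) = - gminus G a"
  unfolding gminus_def by (simp add: G_scaleR G_diff algebra_simps)

lemma gplus_G: "gplus G (G a) = gplus G a"
  unfolding gplus_def by (simp add: algebra_simps)

lemma gminus_G: "gminus G (G a) = - gminus G a"
  unfolding gminus_def by (simp add: algebra_simps)

lemma gplus_fixed: "G a = a \<Longrightarrow> gplus G a = a"
  unfolding gplus_def by (simp add: scaleR_2[symmetric])

lemma gminus_fixed: "G a = - a \<Longrightarrow> gminus G a = a"
  unfolding gminus_def by (simp add: scaleR_2[symmetric])

lemma gplus_gplus [simp]: "gplus G (gplus G a) = gplus G a"
  by (rule gplus_fixed[OF G_gplus])

lemma gminus_gminus [simp]: "gminus G (gminus G a) = gminus G a"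
  by (rule gminus_fixed[OF G_gminus])

lemma gplus_gminus [simp]: "gplus G (gminus G a) = 0"
  unfolding gplus_def by (simp add: G_gminus)

lemma gminus_gplus [simp]: "gminus G (gplus G a) = 0"
  unfolding gminus_def by (simp add: G_gplus)

lemma gplus_add_gminus: "gplus G a + gminus G a = a"
proof -
  have "gplus G a + gminus G a = (1/2) *\<^sub>R ((a + G a) + (a - G a))"
    unfolding gplus_def gminus_def by (simp only: scaleR_right_distrib)
  also have "(a + G a) + (a - G a) = 2 *\<^sub>R a"
    by (simp add: scaleR_2)
  finally show ?thesis
    by simp
qed

lemma ip_gplus: "ip (gplus G x) y = ip x (gplus G y)"
  unfolding gplus_def by (simp add: ip_scaleR ip_scaleR_right ip_add ip_add_right ip_G)

lemma ip_gminus: "ip (gminus G x) y = ip x (gminus G y)"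
  unfolding gminus_def by (simp add: ip_scaleR ip_scaleR_right ip_diff ip_diff_right ip_G)

lemma ip_gplus_gminus: "ip (gplus G x) (gminus G y) = 0"
  by (simp add: ip_gplus)

lemma ip_gminus_gplus: "ip (gminus G x) (gplus G y) = 0"
  by (simp add: ip_gminus)

lemma ca_trace_plus_to_minus_eq_0:
  assumes "module_endo sm (\<lambda>x. \<phi> (gplus G x))" and "\<And>x. G (\<phi> (gplus G x)) = - \<phi> (gplus G x)"
  shows "tr (\<lambda>x. \<phi> (gplus G x)) = 0"
  using assms by (intro ca_trace_sandwich_eq_0[OF _ module_endo_gplus module_endo_gminus])
    (simp_all add: gminus_fixed)

lemma ca_trace_minus_to_plus_eq_0:
  assumes "module_endo sm (\<lambda>x. \<phi> (gminus G x))" and "\<And>x. G (\<phi> (gminus G x)) = \<phi> (gminus G x)"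
  shows "tr (\<lambda>x. \<phi> (gminus G x)) = 0"
  using assms by (intro ca_trace_sandwich_eq_0[OF _ module_endo_gminus module_endo_gplus])
    (simp_all add: gplus_fixed)

end

locale courant_metric_connection = courant_connection + courant_gmetric +
  assumes metric: "metric_connection G D"
begin

abbreviation "Ric \<equiv> total_ric sm ip br G D"
abbreviation "Ric_plus \<equiv> ric_gf_plus sm ip br G D"
abbreviation "Ric_minus \<equiv> ric_gf_minus sm ip br G D"
abbreviation "Ric' \<equiv> ric_gf' sm ip br G D"

lemma G_naive_curv_plus: "G z = z \<Longrightarrow> G (R0 x y z) = R0 x y z"
  using metric unfolding metric_connection_def naive_curv_def by (simp add: G_diff)

lemma G_naive_curv_minus: "G z = - z \<Longrightarrow> G (R0 x y z) = - R0 x y z"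
  using metric unfolding metric_connection_def naive_curv_def by (simp add: G_diff)

lemma module_endo_naive_curv_plus: "module_endo sm (\<lambda>c. R0 (gplus G c) (gminus G a) b)"
  by (rule module_endo_naive_curv[OF module_endo_gplus ip_gplus_gminus])

lemma module_endo_naive_curv_minus: "module_endo sm (\<lambda>c. R0 (gminus G c) (gplus G a) b)"
  by (rule module_endo_naive_curv[OF module_endo_gminus ip_gminus_gplus])

lemma ric_gf_plus_eq: "Ric_plus a b = tr (\<lambda>c. R0 (gplus G c) (gminus G a) (gplus G b))"
  unfolding ric_gf_plus_def trace_plus_def
  by (simp add: gplus_fixed G_naive_curv_plus G_gplus)

lemma ric_gf_minus_eq: "Ric_minus a b = tr (\<lambda>c. R0 (gminus G c) (gplus G a) (gminus G b))"
  unfolding ric_gf_minus_def trace_minus_def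
  by (simp add: gminus_fixed G_naive_curv_minus G_gminus)

lemma total_ric_eq_ric_gf: "Ric a b = Ric_plus a b + Ric_minus a b"
proof -
  let ?pp = "\<lambda>c. R0 (gplus G c) (gminus G a) (gplus G b)"
  let ?mm = "\<lambda>c. R0 (gminus G c) (gplus G a) (gminus G b)"
  let ?pm = "\<lambda>c. R0 (gplus G c) (gminus G a) (gminus G b)"
  let ?mp = "\<lambda>c. R0 (gminus G c) (gplus G a) (gplus G b)"
  have split: "total_curv br G D c a b = (?pp c + ?mm c) + (?pm c + ?mp c)" for c
    unfolding total_curv_def
    by (subst (1 2) gplus_add_gminus[of b, symmetric]) (simp add: naive_curv_add_right algebra_simps)
  have "tr ?pm = 0"
    by (rule ca_trace_plus_to_minus_eq_0[OF module_endo_naive_curv_plus])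
      (simp add: G_naive_curv_minus G_gminus)
  moreover have "tr ?mp = 0"
    by (rule ca_trace_minus_to_plus_eq_0[OF module_endo_naive_curv_minus])
      (simp add: G_naive_curv_plus G_gplus)
  ultimately show ?thesis
    unfolding total_ric_def split ric_gf_plus_eq ric_gf_minus_eq
    by (simp add: ca_trace_add module_endo_add_fun module_endo_naive_curv_plus module_endo_naive_curv_minus)
qed

lemma ric_gf_plus_G_left: "Ric_plus (G a) b = - Ric_plus a b"
  by (simp add: ric_gf_plus_eq gminus_G naive_curv_minus_middle ca_trace_minus
      module_endo_naive_curv_plus)

lemma ric_gf_plus_G_right: "Ric_plus a (G b) = Ric_plus a b"
  by (simp add: ric_gf_plus_eq gplus_G)

lemma ric_gf_minus_G_left: "Ric_minus (G a) b = Ric_minus a b"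
  by (simp add: ric_gf_minus_eq gplus_G)

lemma ric_gf_minus_G_right: "Ric_minus a (G b) = - Ric_minus a b"
  by (simp add: ric_gf_minus_eq gminus_G naive_curv_minus_right ca_trace_minus
      module_endo_naive_curv_minus)

lemma total_ric_G_antisym: "Ric a (G b) = - Ric (G a) b"
  by (simp add: total_ric_eq_ric_gf ric_gf_plus_G_left ric_gf_plus_G_right
      ric_gf_minus_G_left ric_gf_minus_G_right)

lemma ric_gf_plus_proj: "Ric_plus (gminus G a) (gplus G b) = Ric_plus a b"
  by (simp add: ric_gf_plus_eq)

lemma ric_gf_minus_proj: "Ric_minus (gplus G a) (gminus G b) = Ric_minus a b"
  by (simp add: ric_gf_minus_eq)

lemma ric_gf_plus_gminus_right: "Ric_plus a (gminus G b) = 0"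
  by (simp add: ric_gf_plus_eq naive_curv_zero_right ca_trace_zero)

lemma ric_gf_minus_gplus_right: "Ric_minus a (gplus G b) = 0"
  by (simp add: ric_gf_minus_eq naive_curv_zero_right ca_trace_zero)

lemma ric_gf'_skew_iff:
  "(\<forall>a b. Ric' a b = - Ric' b a) \<longleftrightarrow> (\<forall>a b. Ric_plus a b = Ric_minus b a)"
proof
  assume skew: "\<forall>a b. Ric' a b = - Ric' b a"
  show "\<forall>a b. Ric_plus a b = Ric_minus b a"
  proof (intro allI)
    fix a b
    from skew have "Ric' (gminus G a) (gplus G b) = - Ric' (gplus G b) (gminus G a)"
      by blast
    then show "Ric_plus a b = Ric_minus b a"
      by (simp add: ric_gf'_def ric_gf_plus_proj ric_gf_minus_proj
          ric_gf_plus_gminus_right ric_gf_minus_gplus_right)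
  qed
qed (simp add: ric_gf'_def)

lemma total_ric_symmetric_iff:
  "(\<forall>a b. Ric a b = Ric b a) \<longleftrightarrow> (\<forall>a b. Ric_plus a b = Ric_minus b a)"
proof
  assume symmetric: "\<forall>a b. Ric a b = Ric b a"
  show "\<forall>a b. Ric_plus a b = Ric_minus b a"
  proof (intro allI)
    fix a b
    from symmetric have "Ric (gminus G a) (gplus G b) = Ric (gplus G b) (gminus G a)"
      by blast
    then show "Ric_plus a b = Ric_minus b a"
      by (simp add: total_ric_eq_ric_gf ric_gf_plus_proj ric_gf_minus_proj
          ric_gf_plus_gminus_right ric_gf_minus_gplus_right)
  qed
qed (simp add: total_ric_eq_ric_gf add.commute)

end

theorem lemma4p4:
  fixes sm :: "'r::{comm_ring_1,real_algebra_1} \<Rightarrow> 'e::real_vector \<Rightarrow> 'e"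
    and ip :: "'e \<Rightarrow> 'e \<Rightarrow> 'r"
    and anchor :: "'e \<Rightarrow> 'r \<Rightarrow> 'r"
    and br :: "'e \<Rightarrow> 'e \<Rightarrow> 'e"
    and G :: "'e \<Rightarrow> 'e"
    and dv :: "'e \<Rightarrow> 'r"
    and D :: "'e \<Rightarrow> 'e \<Rightarrow> 'e"
  assumes "courant_algebroid sm ip anchor br"
    and "generalized_metric sm ip G"
    and "divergence_operator sm anchor dv"
    and "generalized_connection sm ip anchor D"
    and "metric_connection G D"
    and "has_divergence sm ip D dv"
    and "pure_type_torsion ip br G D"
  shows "(\<forall>a b. total_ric sm ip br G D a (G b) = - total_ric sm ip br G D (G a) b) \<and>
         ((\<forall>a b. ric_gf' sm ip br G D a b = - ric_gf' sm ip br G D b a) \<longleftrightarrow>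
          (\<forall>a b. total_ric sm ip br G D a b = total_ric sm ip br G D b a))"
proof -
  interpret courant_metric_connection sm ip anchor br D G
    by unfold_locales (use assms in blast)+
  show ?thesis
    using total_ric_G_antisym ric_gf'_skew_iff total_ric_symmetric_iff by blast
qed

end
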